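(* Assume Assumption (A) and the Simultaneous Geometric Drift condition (GD) hold with drift function $V$, and $\sup_{x\in C}V(x)<\infty$. Then Assumption (L) holds for every function $f$ such that $\|f\|_{V^{1/2-\delta}}<\infty$ for some $\delta>0$.
   Context: Family of $\pi$-invariant Markov kernels $\{P_\gamma\}_{\gamma\in\Gamma}$ on $(\mathcal X,\mathcal B(\mathcal X))$. Assumption (A): each $P_\gamma$ is $\pi$-invariant, $\pi$-irreducible and aperiodic; and there exist $C$ with $\pi(C)>0$, a probability measure $\nu$ and $\delta_0>0$ with $P_\gamma(x,\cdot)\ge\delta_0\nu(\cdot)$ for all $x\in C,\gamma\in\Gamma$. (GD): there exist $V:\mathcal X\to[1,\infty)$, $\lambda\in(0,1)$, $b<\infty$ with $P_\gamma V\le\lambda V+b1_C$ for all $\gamma$. Split chain: $\mathbb P(Y_{n-1}=1\mid X_{n-1})=\delta_0 1_C(X_{n-1})$, $X_n\sim\nu$ if $Y_{n-1}=1$, else $X_n\sim (P_\gamma(X_{n-1},\cdot)-\delta_0\nu1_C(X_{n-1}))/(1-\delta_01_C(X_{n-1}))$; regeneration time $T=\inf\{n\ge1:Y_{n-1}=1\}$; $\mathbb E_{\nu,\gamma}$ is expectation for the split chain of $P_\gamma$ with $X_0\sim\nu$. Assumption (L) for $f$: for some $\delta'>0$, $\sup_{\gamma\in\Gamma}\mathbb E_{\nu,\gamma}\big|\sum_{j=0}^{T-1}f(X_j)\big|^{2+\delta'}<\infty$. $\|g\|_W=\sup_x|g(x)|/W(x)$. *)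

theory Defs
  imports "HOL-Probability.Probability"
begin

definition markov_kernel :: "'a measure \<Rightarrow> ('a \<Rightarrow> 'a measure) \<Rightarrow> bool" where
  "markov_kernel M P \<longleftrightarrow> P \<in> measurable M (prob_algebra M)"

primrec kernel_pow :: "('a \<Rightarrow> 'a measure) \<Rightarrow> nat \<Rightarrow> 'a \<Rightarrow> 'a set \<Rightarrow> ennreal" where
  "kernel_pow P 0 x A = indicator A x"
| "kernel_pow P (Suc n) x A = (\<integral>\<^sup>+ y. kernel_pow P n y A \<partial>(P x))"

definition invariant_kernel :: "'a measure \<Rightarrow> ('a \<Rightarrow> 'a measure) \<Rightarrow> 'a measure \<Rightarrow> bool" where
  "invariant_kernel M P \<pi> \<longleftrightarrow>
     (\<forall>A\<in>sets M. (\<integral>\<^sup>+ x. emeasure (P x) A \<partial>\<pi>) = emeasure \<pi> A)"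

definition irreducible_kernel :: "'a measure \<Rightarrow> ('a \<Rightarrow> 'a measure) \<Rightarrow> 'a measure \<Rightarrow> bool" where
  "irreducible_kernel M P \<pi> \<longleftrightarrow>
     (\<forall>A\<in>sets M. emeasure \<pi> A > 0 \<longrightarrow> (\<forall>x\<in>space M. \<exists>n\<ge>1. kernel_pow P n x A > 0))"

text \<open>Aperiodicity (Roberts--Rosenthal): no d-cycle of disjoint measurable sets, d \<ge> 2,
  with positive stationary mass.\<close>
definition aperiodic_kernel :: "'a measure \<Rightarrow> ('a \<Rightarrow> 'a measure) \<Rightarrow> 'a measure \<Rightarrow> bool" where
  "aperiodic_kernel M P \<pi> \<longleftrightarrow>
     \<not> (\<exists>d::nat. d \<ge> 2 \<and> (\<exists>X :: nat \<Rightarrow> 'a set.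
           (\<forall>i<d. X i \<in> sets M) \<and> disjoint_family_on X {..<d} \<and> emeasure \<pi> (X 0) > 0 \<and>
           (\<forall>i<d. \<forall>x\<in>X i. emeasure (P x) (X (Suc i mod d)) = 1)))"

definition assumption_A ::
  "'a measure \<Rightarrow> 'g set \<Rightarrow> ('g \<Rightarrow> 'a \<Rightarrow> 'a measure) \<Rightarrow> 'a measure \<Rightarrow> 'a set \<Rightarrow> 'a measure \<Rightarrow> real \<Rightarrow> bool"
  where
  "assumption_A M \<Gamma> P \<pi> C \<nu> \<delta>0 \<longleftrightarrow>
     prob_space \<pi> \<and> sets \<pi> = sets M \<and>
     (\<forall>\<gamma>\<in>\<Gamma>. markov_kernel M (P \<gamma>) \<and> invariant_kernel M (P \<gamma>) \<pi> \<and>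
               irreducible_kernel M (P \<gamma>) \<pi> \<and> aperiodic_kernel M (P \<gamma>) \<pi>) \<and>
     C \<in> sets M \<and> emeasure \<pi> C > 0 \<and>
     prob_space \<nu> \<and> sets \<nu> = sets M \<and> \<delta>0 > 0 \<and>
     (\<forall>\<gamma>\<in>\<Gamma>. \<forall>x\<in>C. \<forall>A\<in>sets M. ennreal \<delta>0 * emeasure \<nu> A \<le> emeasure (P \<gamma> x) A)"

definition drift_GD ::
  "'a measure \<Rightarrow> 'g set \<Rightarrow> ('g \<Rightarrow> 'a \<Rightarrow> 'a measure) \<Rightarrow> 'a set \<Rightarrow> ('a \<Rightarrow> real) \<Rightarrow> real \<Rightarrow> real \<Rightarrow> bool"
  where
  "drift_GD M \<Gamma> P C V lam b \<longleftrightarrow>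
     V \<in> borel_measurable M \<and> (\<forall>x\<in>space M. V x \<ge> 1) \<and> 0 < lam \<and> lam < 1 \<and>
     (\<forall>\<gamma>\<in>\<Gamma>. \<forall>x\<in>space M.
        (\<integral>\<^sup>+ y. ennreal (V y) \<partial>(P \<gamma> x)) \<le> ennreal (lam * V x + b * indicator C x))"

definition W_norm_finite :: "'a measure \<Rightarrow> ('a \<Rightarrow> real) \<Rightarrow> ('a \<Rightarrow> real) \<Rightarrow> bool" where
  "W_norm_finite M W g \<longleftrightarrow> (\<exists>K::real. \<forall>x\<in>space M. \<bar>g x\<bar> \<le> K * W x)"

definition split_residual ::
  "'a measure \<Rightarrow> ('a \<Rightarrow> 'a measure) \<Rightarrow> 'a set \<Rightarrow> real \<Rightarrow> 'a measure \<Rightarrow> 'a \<Rightarrow> 'a measure" where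
  "split_residual M P C \<delta>0 \<nu> x =
     measure_of (space M) (sets M)
       (\<lambda>A. (emeasure (P x) A - ennreal (\<delta>0 * indicator C x) * emeasure \<nu> A)
            / (1 - ennreal (\<delta>0 * indicator C x)))"

text \<open>split_path ... n x g = E[g((X_0,Y_0),...,(X_n,Y_n)) | X_0 = x] for the split chain
  of kernel P: Y_j ~ Bernoulli(\<delta>0 1_C(X_j)) given X_j, and X_{j+1} ~ \<nu> if Y_j = 1,
  else X_{j+1} ~ residual kernel at X_j.\<close>
primrec split_path ::
  "'a measure \<Rightarrow> ('a \<Rightarrow> 'a measure) \<Rightarrow> 'a set \<Rightarrow> real \<Rightarrow> 'a measure \<Rightarrow> nat \<Rightarrow> 'a
     \<Rightarrow> (('a \<times> bool) list \<Rightarrow> ennreal) \<Rightarrow> ennreal" where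
  "split_path M P C \<delta>0 \<nu> 0 x g =
     (\<integral>\<^sup>+ y. g [(x, y)] \<partial>measure_pmf (bernoulli_pmf (\<delta>0 * indicator C x)))"
| "split_path M P C \<delta>0 \<nu> (Suc n) x g =
     (\<integral>\<^sup>+ y. (\<integral>\<^sup>+ x'. split_path M P C \<delta>0 \<nu> n x' (\<lambda>zs. g ((x, y) # zs))
                 \<partial>(if y then \<nu> else split_residual M P C \<delta>0 \<nu> x))
        \<partial>measure_pmf (bernoulli_pmf (\<delta>0 * indicator C x)))"

definition split_exp ::
  "'a measure \<Rightarrow> ('a \<Rightarrow> 'a measure) \<Rightarrow> 'a set \<Rightarrow> real \<Rightarrow> 'a measure \<Rightarrow> nat
     \<Rightarrow> (('a \<times> bool) list \<Rightarrow> ennreal) \<Rightarrow> ennreal" where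
  "split_exp M P C \<delta>0 \<nu> n g = (\<integral>\<^sup>+ x. split_path M P C \<delta>0 \<nu> n x g \<partial>\<nu>)"

text \<open>On a path prefix zs = [Z_0,...,Z_n]: the event T = n+1, i.e. Y_n = 1 and Y_j = 0 for j < n.\<close>
definition regen_at :: "nat \<Rightarrow> ('a \<times> bool) list \<Rightarrow> bool" where
  "regen_at n zs \<longleftrightarrow> snd (zs ! n) \<and> (\<forall>j<n. \<not> snd (zs ! j))"

text \<open>Assumption (L) for f: T is a.s. finite under every P_\<gamma>, and
  sup_\<gamma> E_{\<nu>,\<gamma>} |sum_{j<T} f(X_j)|^{2+\<delta>'} < \<infin>, the expectation being
  sum_{n} E[ |sum_{j\<le>n} f(X_j)|^{2+\<delta>'} ; T = n+1 ].\<close>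
definition assumption_L ::
  "'a measure \<Rightarrow> 'g set \<Rightarrow> ('g \<Rightarrow> 'a \<Rightarrow> 'a measure) \<Rightarrow> 'a set \<Rightarrow> real \<Rightarrow> 'a measure
     \<Rightarrow> ('a \<Rightarrow> real) \<Rightarrow> bool" where
  "assumption_L M \<Gamma> P C \<delta>0 \<nu> f \<longleftrightarrow>
     (\<exists>\<delta>'>0.
       (\<forall>\<gamma>\<in>\<Gamma>. (\<Sum>n. split_exp M (P \<gamma>) C \<delta>0 \<nu> n
                        (\<lambda>zs. if regen_at n zs then 1 else 0)) = 1) \<and>
       (SUP \<gamma>\<in>\<Gamma>. (\<Sum>n. split_exp M (P \<gamma>) C \<delta>0 \<nu> n
            (\<lambda>zs. if regen_at n zs
                  then ennreal (\<bar>\<Sum>j\<le>n. f (fst (zs ! j))\<bar> powr (2 + \<delta>'))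
                  else 0))) < \<infinity>)"

end

theory Submission
  imports Defs "HOL-Real_Asymp.Real_Asymp"
begin

text \<open>Away from regenerations the split chain moves by the sub-probability kernel
  \<open>Q(x,\<cdot>) = P(x,\<cdot>) - \<delta>0 1\<^sub>C(x) \<nu>\<close>. For a suitable constant \<open>a\<close> the function \<open>W = a + V\<close>
  satisfies \<open>Q W \<le> \<kappa> W\<close> with \<open>\<kappa> < 1\<close> depending only on \<open>\<lambda>, b, \<delta>0\<close>; hence the probability of no
  regeneration during \<open>n\<close> steps decays like \<open>\<kappa>\<^sup>n W\<close> and \<open>T\<close> is a.s. finite. Since
  \<open>|f| \<le> K V\<^bsup>1/2-\<delta>\<^esup>\<close>, a Young-type inequality gives
  \<open>|\<Sum>\<^sub>j\<^sub>\<le>\<^sub>n f(X\<^sub>j)|\<^bsup>2+\<delta>\<^esup> \<le> c \<Sum>\<^sub>j\<^sub>\<le>\<^sub>n V(X\<^sub>j) + c' \<theta>\<^sup>n\<close> with \<open>\<theta>\<kappa> < 1\<close>, and the expectation of the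
  right-hand side on \<open>{T = n+1}\<close>, summed over \<open>n\<close>, is bounded through the drift by a multiple of
  \<open>\<nu> W\<close>. Finally \<open>\<nu> W < \<infinity>\<close> because \<open>\<delta>0 \<nu> \<le> P(x,\<cdot>)\<close> for \<open>x \<in> C\<close> and \<open>V\<close> is bounded on \<open>C\<close>.\<close>

(* Unlike nn_integral_add and nn_integral_scale_measure these need no measurability:
   the split-chain integrands below are not known to be measurable. *)
lemma nn_integral_superadditive:
  "integral\<^sup>N M f + integral\<^sup>N M g \<le> (\<integral>\<^sup>+x. f x + g x \<partial>M)"
proof -
  let ?A = "{h. simple_function M h \<and> h \<le> f}"
  let ?B = "{h. simple_function M h \<and> h \<le> g}"
  have "(\<lambda>_. 0) \<in> ?A" "(\<lambda>_. 0) \<in> ?B" by (auto simp: le_fun_def)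
  then have nA: "?A \<noteq> {}" and nB: "?B \<noteq> {}" by blast+
  have "integral\<^sup>N M f + integral\<^sup>N M g = (SUP a\<in>?A. integral\<^sup>S M a) + (SUP b\<in>?B. integral\<^sup>S M b)"
    unfolding nn_integral_def ..
  also have "\<dots> = (SUP a\<in>?A. (SUP b\<in>?B. integral\<^sup>S M a + integral\<^sup>S M b))"
    by (simp add: ennreal_SUP_add_left[OF nA, symmetric] ennreal_SUP_add_right[OF nB, symmetric])
  also have "\<dots> \<le> (\<integral>\<^sup>+x. f x + g x \<partial>M)"
  proof (intro SUP_least)
    fix a b assume a: "a \<in> ?A" and b: "b \<in> ?B"
    have "integral\<^sup>S M a + integral\<^sup>S M b = (\<integral>\<^sup>+x. a x + b x \<partial>M)"
      using a b by (simp add: nn_integral_eq_simple_integral)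
    also have "\<dots> \<le> (\<integral>\<^sup>+x. f x + g x \<partial>M)"
      using a b by (intro nn_integral_mono) (auto simp: le_fun_def intro: add_mono)
    finally show "integral\<^sup>S M a + integral\<^sup>S M b \<le> (\<integral>\<^sup>+x. f x + g x \<partial>M)" .
  qed
  finally show ?thesis .
qed

lemma nn_integral_sum_superadditive:
  assumes "finite I"
  shows "(\<Sum>i\<in>I. integral\<^sup>N M (f i)) \<le> (\<integral>\<^sup>+x. (\<Sum>i\<in>I. f i x) \<partial>M)"
  using assms
proof (induction I rule: finite_induct)
  case (insert i I)
  have "(\<Sum>i\<in>insert i I. integral\<^sup>N M (f i)) \<le> integral\<^sup>N M (f i) + (\<integral>\<^sup>+x. (\<Sum>i\<in>I. f i x) \<partial>M)"
    using insert by (simp add: add_left_mono)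
  also have "\<dots> \<le> (\<integral>\<^sup>+x. (\<Sum>i\<in>insert i I. f i x) \<partial>M)"
    using nn_integral_superadditive[of M "f i"] insert by simp
  finally show ?case .
qed simp

lemma nn_integral_scale_measure':
  "nn_integral (scale_measure r M) f = r * nn_integral M f"
proof -
  have sf: "simple_function (scale_measure r M) g = simple_function M g" for g :: "_ \<Rightarrow> ennreal"
    unfolding simple_function_def by (simp add: space_scale_measure)
  have si: "integral\<^sup>S (scale_measure r M) g = r * integral\<^sup>S M g" for g
    unfolding simple_integral_def
    by (simp add: space_scale_measure sum_distrib_left mult.left_commute)
  have "(\<lambda>_. 0) \<in> {g. simple_function M g \<and> g \<le> f}" by (auto simp: le_fun_def)
  then have "{g. simple_function M g \<and> g \<le> f} \<noteq> {}" by blast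
  then show ?thesis
    unfolding nn_integral_def sf si by (simp add: SUP_mult_left_ennreal)
qed

lemma powr_mult_powr_le_add:
  fixes a N p r :: real
  assumes a: "1 \<le> a" and N: "1 \<le> N" and r: "0 < r" "r < 1" and p: "0 \<le> p"
  shows "N powr p * a powr r \<le> a + N powr (p / (1 - r))"
proof -
  define k where "k = r / (1 - r)"
  have k: "0 < k" using r by (simp add: k_def)
  have rk: "r / k = 1 - r" using r by (simp add: k_def)
  have pk: "p + p * k = p / (1 - r)" using r by (simp add: k_def field_simps)
  have pos: "0 < N powr p" "0 < a powr r" "0 < N powr (p * k)" using a N by auto
  show ?thesis
  proof (cases "a powr r \<le> N powr (p * k)")
    case True
    have "N powr p * a powr r \<le> N powr p * N powr (p * k)"
      using True pos by (intro mult_left_mono) auto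
    also have "\<dots> = N powr (p / (1 - r))" using pk by (simp add: powr_add[symmetric])
    finally show ?thesis using a by simp
  next
    case False
    have "N powr p = (N powr (p * k)) powr (1 / k)" using k N by (simp add: powr_powr)
    also have "\<dots> \<le> (a powr r) powr (1 / k)"
      using False k pos by (intro powr_mono2) auto
    also have "\<dots> = a powr (1 - r)" using rk by (simp add: powr_powr)
    finally have "N powr p * a powr r \<le> a powr (1 - r) * a powr r"
      using pos by (intro mult_right_mono) auto
    also have "\<dots> = a" using a by (simp add: powr_add[symmetric])
    finally show ?thesis using powr_ge_zero[of N "p / (1 - r)"] by linarith
  qed
qed

lemma powr_le_mult_power:
  fixes q m :: real
  assumes "1 < q"
  shows "\<exists>c>0. \<forall>n. real (Suc n) powr m \<le> c * q ^ n"
proof -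
  have "((\<lambda>n. (real n + 1) powr m / q ^ n) \<longlongrightarrow> 0) sequentially"
    using assms by real_asymp
  then have "Bseq (\<lambda>n. (real n + 1) powr m / q ^ n)"
    by (intro convergent_imp_Bseq) (auto simp: convergent_def)
  then obtain c where c: "c > 0" "\<And>n. norm ((real n + 1) powr m / q ^ n) \<le> c"
    by (auto simp: Bseq_def)
  have "real (Suc n) powr m \<le> c * q ^ n" for n
  proof -
    have q: "0 < q ^ n" using assms by simp
    then have "(real n + 1) powr m / q ^ n \<le> c" using c(2)[of n] by simp
    then show ?thesis using q by (simp add: divide_le_eq add.commute)
  qed
  then show ?thesis using c(1) by blast
qed

text \<open>The sum is at most \<open>(n+1)\<close> times its largest term \<open>|f(x\<^sub>j\<^sub>0)|\<close>; the factor \<open>(n+1)\<^sup>p\<close> is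
  then traded against \<open>V(x\<^sub>j\<^sub>0)\<^sup>r\<close>, \<open>r < 1\<close>, by \<open>powr_mult_powr_le_add\<close>.\<close>
lemma abs_sum_powr_le:
  fixes f V :: "'a \<Rightarrow> real" and x :: "nat \<Rightarrow> 'a"
  assumes V: "\<And>j. j \<le> n \<Longrightarrow> 1 \<le> V (x j)"
    and f: "\<And>j. j \<le> n \<Longrightarrow> \<bar>f (x j)\<bar> \<le> K * V (x j) powr e"
    and K: "0 \<le> K" and p: "0 \<le> p" and r: "0 < r" "r < 1" "e * p \<le> r"
  shows "\<bar>\<Sum>j\<le>n. f (x j)\<bar> powr p
           \<le> K powr p * ((\<Sum>j\<le>n. V (x j)) + real (Suc n) powr (p / (1 - r)))"
proof -
  let ?N = "real (Suc n)"
  define m where "m = Max ((\<lambda>j. \<bar>f (x j)\<bar>) ` {..n})"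
  have "m \<in> (\<lambda>j. \<bar>f (x j)\<bar>) ` {..n}" unfolding m_def by (rule Max_in) auto
  then obtain j0 where j0: "j0 \<le> n" "\<bar>f (x j0)\<bar> = m" by auto
  have le_m: "\<bar>f (x j)\<bar> \<le> m" if "j \<le> n" for j
    unfolding m_def using that by (intro Max_ge) auto
  have m0: "0 \<le> m" using j0(2) by (metis abs_ge_zero)
  have V0: "1 \<le> V (x j0)" using V j0(1) by blast
  have "\<bar>\<Sum>j\<le>n. f (x j)\<bar> \<le> (\<Sum>j\<le>n. m)"
    using le_m by (intro order_trans[OF sum_abs] sum_mono) auto
  then have "\<bar>\<Sum>j\<le>n. f (x j)\<bar> powr p \<le> (?N * m) powr p"
    using p by (intro powr_mono2) auto
  also have "\<dots> = ?N powr p * m powr p" using m0 by (simp add: powr_mult)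
  also have "\<dots> \<le> ?N powr p * (K powr p * V (x j0) powr r)"
  proof (intro mult_left_mono)
    have "m powr p \<le> (K * V (x j0) powr e) powr p"
      using f[OF j0(1)] j0(2) p m0 by (intro powr_mono2) auto
    also have "\<dots> = K powr p * V (x j0) powr (e * p)"
      using K V0 by (simp add: powr_mult powr_powr)
    also have "\<dots> \<le> K powr p * V (x j0) powr r"
      using V0 r by (intro mult_left_mono powr_mono) auto
    finally show "m powr p \<le> K powr p * V (x j0) powr r" .
  qed simp
  also have "\<dots> = K powr p * (?N powr p * V (x j0) powr r)" by (simp add: algebra_simps)
  also have "\<dots> \<le> K powr p * (V (x j0) + ?N powr (p / (1 - r)))"
    using powr_mult_powr_le_add[OF V0 _ r(1,2) p, of ?N] by (intro mult_left_mono) auto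
  also have "\<dots> \<le> K powr p * ((\<Sum>j\<le>n. V (x j)) + ?N powr (p / (1 - r)))"
    using j0(1) V by (intro mult_left_mono add_right_mono member_le_sum)
      (auto intro: order_trans[OF zero_le_one])
  finally show ?thesis .
qed

lemma abs_sum_powr_le_geometric:
  fixes f V :: "'a \<Rightarrow> real"
  assumes V: "\<And>x. x \<in> S \<Longrightarrow> 1 \<le> V x"
    and f: "\<And>x. x \<in> S \<Longrightarrow> \<bar>f x\<bar> \<le> K * V x powr (1/2 - \<delta>)"
    and \<delta>: "0 < \<delta>" and q: "1 < q"
  obtains c c' where "0 \<le> c" "0 \<le> c'"
    "\<And>n x. (\<And>j. j \<le> n \<Longrightarrow> x j \<in> S) \<Longrightarrow>
       \<bar>\<Sum>j\<le>n. f (x j)\<bar> powr (2 + \<delta>) \<le> c * (\<Sum>j\<le>n. V (x j)) + c' * q ^ n"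
proof -
  let ?p = "2 + \<delta>" and ?e = "1/2 - \<delta>"
  define r where "r = max (?e * ?p) (1/2)"
  have "?e * ?p = 1 - 3 / 2 * \<delta> - \<delta> * \<delta>" by (simp add: algebra_simps)
  then have "?e * ?p < 1" using \<delta> mult_pos_pos[OF \<delta> \<delta>] by linarith
  then have r: "0 < r" "r < 1" "?e * ?p \<le> r" by (auto simp: r_def)
  obtain c0 where c0: "c0 > 0" "\<And>n. real (Suc n) powr (?p / (1 - r)) \<le> c0 * q ^ n"
    using powr_le_mult_power[OF q] by blast
  define K' where "K' = max K 0"
  have f': "\<bar>f x\<bar> \<le> K' * V x powr ?e" if "x \<in> S" for x
    using f[OF that] mult_right_mono[of K K' "V x powr ?e"] by (simp add: K'_def)
  show ?thesis
  proof (rule that[of "K' powr ?p" "K' powr ?p * c0"])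
    show "0 \<le> K' powr ?p" "0 \<le> K' powr ?p * c0" using c0 by simp_all
    fix n and x :: "nat \<Rightarrow> 'a" assume x: "\<And>j. j \<le> n \<Longrightarrow> x j \<in> S"
    have "\<bar>\<Sum>j\<le>n. f (x j)\<bar> powr ?p
        \<le> K' powr ?p * ((\<Sum>j\<le>n. V (x j)) + real (Suc n) powr (?p / (1 - r)))"
      using x \<delta> by (intro abs_sum_powr_le[where e = "1/2 - \<delta>"] V f' r) (auto simp: K'_def)
    also have "\<dots> \<le> K' powr ?p * ((\<Sum>j\<le>n. V (x j)) + c0 * q ^ n)"
      using c0(2) by (intro mult_left_mono add_left_mono) auto
    finally show "\<bar>\<Sum>j\<le>n. f (x j)\<bar> powr ?p \<le> K' powr ?p * (\<Sum>j\<le>n. V (x j)) + K' powr ?p * c0 * q ^ n"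
      by (simp add: algebra_simps)
  qed
qed

text \<open>With \<open>W = drift_offset b d + V\<close>, the residual sub-kernel \<open>P - d 1\<^sub>C \<nu>\<close> contracts \<open>W\<close> by the
  factor \<open>drift_rate \<lambda> b d\<close>: off \<open>C\<close> because \<open>\<lambda> < 1\<close>, on \<open>C\<close> because the removed mass \<open>d\<close>
  pays for the extra \<open>b\<close> (\<open>drift_rate_inequality\<close>).\<close>
definition drift_offset :: "real \<Rightarrow> real \<Rightarrow> real" where
  "drift_offset b d = 2 * b / d + 1"

definition drift_rate :: "real \<Rightarrow> real \<Rightarrow> real \<Rightarrow> real" where
  "drift_rate lam b d = 1 - min (d / 2) ((1 - lam) / (drift_offset b d + 1))"

lemma drift_offset_ge_1: "0 \<le> b \<Longrightarrow> 0 < d \<Longrightarrow> 1 \<le> drift_offset b d"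
  by (simp add: drift_offset_def)

lemma drift_rate_bounds:
  assumes "0 < lam" "lam < 1" "0 \<le> b" "0 < d"
  shows "0 < drift_rate lam b d" "drift_rate lam b d < 1"
proof -
  let ?e = "min (d / 2) ((1 - lam) / (drift_offset b d + 1))"
  have a: "2 \<le> drift_offset b d + 1" using drift_offset_ge_1 assms by simp
  have "(1 - lam) / (drift_offset b d + 1) \<le> (1 - lam) / 2"
    using a assms by (intro divide_left_mono) auto
  then have le: "?e \<le> (1 - lam) / 2" by (rule order_trans[OF min.cobounded2])
  have "(1 - lam) / 2 < 1" using assms by simp
  with le have "?e < 1" by (rule le_less_trans)
  moreover have "0 < ?e" using a assms by simp
  ultimately show "0 < drift_rate lam b d" "drift_rate lam b d < 1"
    by (simp_all add: drift_rate_def)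
qed

lemma drift_rate_inequality:
  fixes lam b d v :: real
  assumes lam: "0 < lam" "lam < 1" and b: "0 \<le> b" and d: "0 < d" and v: "1 \<le> v"
  shows "drift_offset b d + lam * v \<le> drift_rate lam b d * (drift_offset b d + v)"
    and "drift_offset b d * (1 - d) + (lam * v + b) \<le> drift_rate lam b d * (drift_offset b d + v)"
proof -
  let ?a = "drift_offset b d"
  let ?e = "min (d / 2) ((1 - lam) / (?a + 1))"
  have a: "1 \<le> ?a" using drift_offset_ge_1 b d .
  have e0: "0 \<le> ?e" using lam a d by auto
  have expand: "drift_rate lam b d * (?a + v) = ?a + v - (?e * ?a + ?e * v)"
    by (simp add: drift_rate_def algebra_simps)
  have "?e * (?a + 1) \<le> (1 - lam) / (?a + 1) * (?a + 1)"
    using a by (intro mult_right_mono) auto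
  then have "?e * (?a + 1) \<le> 1 - lam" using a by simp
  then have ea: "?e * ?a + ?e \<le> 1 - lam" by (simp add: distrib_left)
  have "?e * ?a * 1 \<le> ?e * ?a * v" using e0 a v by (intro mult_left_mono) auto
  moreover have "(?e * ?a + ?e) * v \<le> (1 - lam) * v" using ea v by (intro mult_right_mono) auto
  ultimately have "?e * ?a + ?e * v \<le> v - lam * v" by (simp add: algebra_simps)
  then show "?a + lam * v \<le> drift_rate lam b d * (?a + v)"
    unfolding expand by linarith
  have "?e * ?a \<le> d / 2 * ?a" using a by (intro mult_right_mono min.cobounded1) auto
  moreover have "b \<le> d / 2 * ?a" using d by (simp add: drift_offset_def field_simps)
  moreover have "?e \<le> 1 - lam" using ea mult_nonneg_nonneg[OF e0, of ?a] a by linarith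
  then have "?e * v \<le> (1 - lam) * v" using v by (intro mult_right_mono) auto
  ultimately show "?a * (1 - d) + (lam * v + b) \<le> drift_rate lam b d * (?a + v)"
    unfolding expand by (simp add: algebra_simps)
qed

lemma mult_le_divide_one_minus_mult:
  fixes c v w k :: real
  assumes "0 \<le> c" "0 \<le> v" "v \<le> w" "0 \<le> k" "k < 1"
  shows "c * v \<le> c / (1 - k) * w"
proof -
  have "0 \<le> w * k" using assms by simp
  then have "w \<le> w / (1 - k)" using assms by (simp add: le_divide_eq algebra_simps)
  then have "c * v \<le> c * (w / (1 - k))"
    using assms by (intro mult_left_mono) auto
  then show ?thesis by simp
qed

lemma regen_weight_step_inequality:
  fixes s c t p k q v w :: real
  assumes k: "k < 1" "q * k < 1" and c: "0 \<le> c" and t: "0 \<le> t" and "v \<le> w" "p \<le> w"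
  shows "(s + c * v + t) * p + (s + c * v) * (1 - p) + (c / (1 - k) + t * q / (1 - q * k)) * (k * w)
     \<le> s + (c / (1 - k) + t / (1 - q * k)) * w"
proof -
  have ck: "c / (1 - k) * k = c / (1 - k) - c" using k by (simp add: field_simps)
  have tk: "t * q / (1 - q * k) * k = t / (1 - q * k) - t" using k by (simp add: field_simps)
  have "(s + c * v + t) * p + (s + c * v) * (1 - p) + (c / (1 - k) + t * q / (1 - q * k)) * (k * w)
      = s + c * v + t * p + (c / (1 - k) * k) * w + (t * q / (1 - q * k) * k) * w"
    by (simp add: algebra_simps)
  also have "\<dots> = s + (c / (1 - k) + t / (1 - q * k)) * w + c * (v - w) + t * (p - w)"
    unfolding ck tk by (simp add: algebra_simps)
  also have "\<dots> \<le> s + (c / (1 - k) + t / (1 - q * k)) * w"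
    using assms mult_nonneg_nonpos[of c "v - w"] mult_nonneg_nonpos[of t "p - w"] by simp
  finally show ?thesis .
qed

lemma regen_at_0: "regen_at 0 (z # zs) \<longleftrightarrow> snd z"
  unfolding regen_at_def by auto

lemma regen_at_Suc: "regen_at (Suc n) (z # zs) \<longleftrightarrow> \<not> snd z \<and> regen_at n zs"
  unfolding regen_at_def by (auto simp: less_Suc_eq_0_disj)

locale split_chain =
  fixes M :: "'a measure" and P :: "'a \<Rightarrow> 'a measure" and C :: "'a set" and d0 :: real
    and nu :: "'a measure" and V :: "'a \<Rightarrow> real" and lam b Vs :: real
  assumes P: "P \<in> measurable M (prob_algebra M)"
    and C: "C \<in> sets M" and C_nonempty: "C \<noteq> {}"
    and nu: "prob_space nu" and sets_nu: "sets nu = sets M"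
    and d0: "0 < d0"
    and minorization: "\<And>x A. x \<in> C \<Longrightarrow> A \<in> sets M \<Longrightarrow> ennreal d0 * emeasure nu A \<le> emeasure (P x) A"
    and V_measurable: "V \<in> borel_measurable M" and V_ge_1: "\<And>x. x \<in> space M \<Longrightarrow> 1 \<le> V x"
    and lam: "0 < lam" "lam < 1" and b: "0 \<le> b"
    and drift: "\<And>x. x \<in> space M \<Longrightarrow>
      (\<integral>\<^sup>+y. ennreal (V y) \<partial>P x) \<le> ennreal (lam * V x + b * indicator C x)"
    and V_le_Vs: "\<And>x. x \<in> C \<Longrightarrow> V x \<le> Vs"
begin

abbreviation path_exp where "path_exp \<equiv> split_path M P C d0 nu"

abbreviation \<kappa> where "\<kappa> \<equiv> drift_rate lam b d0"

definition regen_prob :: "'a \<Rightarrow> real" where "regen_prob x = d0 * indicator C x"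

text \<open>The residual kernel without the normalisation by \<open>1 - regen_prob x\<close> of \<open>split_residual\<close>,
  whose division is junk where \<open>regen_prob x = 1\<close>.\<close>
definition sub_residual :: "'a \<Rightarrow> 'a measure" where
  "sub_residual x = measure_of (space M) (sets M)
     (\<lambda>A. ennreal (measure (P x) A - regen_prob x * measure nu A))"

definition W :: "'a \<Rightarrow> real" where "W x = drift_offset b d0 + V x"

definition nu_W_bound :: real where "nu_W_bound = drift_offset b d0 + (lam * Vs + b) / d0"

lemmas [measurable_cong] = sets_nu

lemma
  assumes "x \<in> space M"
  shows prob_space_P: "prob_space (P x)" and sets_P: "sets (P x) = sets M"
  using measurable_space[OF P assms] by (auto simp: space_prob_algebra)

lemma space_P: "x \<in> space M \<Longrightarrow> space (P x) = space M"
  using sets_P sets_eq_imp_space_eq by blast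

lemma space_nu: "space nu = space M"
  using sets_nu sets_eq_imp_space_eq by blast

lemma C_subset_space: "C \<subseteq> space M"
  using C sets.sets_into_space by blast

lemma d0_le_1: "d0 \<le> 1"
proof -
  obtain x where x: "x \<in> C" using C_nonempty by blast
  then have "x \<in> space M" using C_subset_space by blast
  moreover have "ennreal d0 * emeasure nu (space M) \<le> emeasure (P x) (space M)"
    using minorization x by auto
  ultimately have "ennreal d0 \<le> 1"
    using prob_space.emeasure_space_1[OF nu] prob_space.emeasure_space_1[OF prob_space_P]
      space_nu space_P by simp
  then show ?thesis by simp
qed

lemma Vs_ge_1: "1 \<le> Vs"
proof -
  obtain x where "x \<in> C" using C_nonempty by blast
  then show ?thesis using C_subset_space V_ge_1[of x] V_le_Vs[of x] by auto
qed

lemma regen_prob_nonneg: "0 \<le> regen_prob x" and regen_prob_le_1: "regen_prob x \<le> 1"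
  using d0 d0_le_1 by (auto simp: regen_prob_def indicator_def)

lemma regen_prob_measurable[measurable]: "regen_prob \<in> borel_measurable M"
  unfolding regen_prob_def using C by measurable

lemma minorization_measure:
  assumes x: "x \<in> space M" and A: "A \<in> sets M"
  shows "regen_prob x * measure nu A \<le> measure (P x) A"
proof (cases "x \<in> C")
  case True
  then have "ennreal (d0 * measure nu A) \<le> ennreal (measure (P x) A)"
    using minorization[OF True A] d0 finite_measure.emeasure_eq_measure[OF prob_space.finite_measure[OF nu]]
      finite_measure.emeasure_eq_measure[OF prob_space.finite_measure[OF prob_space_P[OF x]]]
    by (simp add: ennreal_mult'')
  then show ?thesis using True by (simp add: regen_prob_def)
qed (simp add: regen_prob_def)

lemma countably_additive_sub_residual:
  assumes x: "x \<in> space M"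
  shows "countably_additive (sets M) (\<lambda>A. ennreal (measure (P x) A - regen_prob x * measure nu A))"
  unfolding countably_additive_def
proof (intro allI impI)
  fix A :: "nat \<Rightarrow> 'a set"
  assume A: "range A \<subseteq> sets M" "disjoint_family A" "\<Union>(range A) \<in> sets M"
  interpret Px: prob_space "P x" using prob_space_P[OF x] .
  interpret nu: prob_space nu by (rule nu)
  have "(\<lambda>i. measure (P x) (A i)) sums measure (P x) (\<Union>i. A i)"
    using A sets_P[OF x] by (intro measure_UNION) auto
  moreover have "(\<lambda>i. measure nu (A i)) sums measure nu (\<Union>i. A i)"
    using A sets_nu by (intro measure_UNION) auto
  ultimately have "(\<lambda>i. measure (P x) (A i) - regen_prob x * measure nu (A i)) sums
      (measure (P x) (\<Union>i. A i) - regen_prob x * measure nu (\<Union>i. A i))"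
    by (intro sums_diff sums_mult)
  then have "(\<lambda>i. ennreal (measure (P x) (A i) - regen_prob x * measure nu (A i))) sums
      ennreal (measure (P x) (\<Union>i. A i) - regen_prob x * measure nu (\<Union>i. A i))"
    using minorization_measure[OF x] A by (subst sums_ennreal) auto
  then show "(\<Sum>i. ennreal (measure (P x) (A i) - regen_prob x * measure nu (A i))) =
      ennreal (measure (P x) (\<Union>(range A)) - regen_prob x * measure nu (\<Union>(range A)))"
    by (simp add: sums_iff)
qed

lemma emeasure_sub_residual:
  assumes "x \<in> space M" "A \<in> sets M"
  shows "emeasure (sub_residual x) A = ennreal (measure (P x) A - regen_prob x * measure nu A)"
  unfolding sub_residual_def
  by (rule emeasure_measure_of_sigma[OF _ _ countably_additive_sub_residual[OF assms(1)] assms(2)])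
     (auto simp: positive_def sets.sigma_algebra_axioms)

lemma sets_sub_residual[simp, measurable_cong]: "sets (sub_residual x) = sets M"
  unfolding sub_residual_def by (simp add: sets.space_closed)

lemma space_sub_residual[simp]: "space (sub_residual x) = space M"
  unfolding sub_residual_def by (simp add: sets.space_closed)

lemma emeasure_sub_residual_space:
  assumes x: "x \<in> space M"
  shows "emeasure (sub_residual x) (space M) = ennreal (1 - regen_prob x)"
  using emeasure_sub_residual[OF x sets.top] prob_space.prob_space[OF nu]
    prob_space.prob_space[OF prob_space_P[OF x]] space_nu space_P[OF x] by simp

lemma sub_residual_le_P:
  assumes x: "x \<in> space M"
  shows "sub_residual x \<le> P x"
proof -
  have "emeasure (sub_residual x) A \<le> emeasure (P x) A" for A
  proof (cases "A \<in> sets M")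
    case True
    then show ?thesis
      using emeasure_sub_residual[OF x True] regen_prob_nonneg[of x] measure_nonneg[of nu A]
        finite_measure.emeasure_eq_measure[OF prob_space.finite_measure[OF prob_space_P[OF x]]]
      by (simp add: ennreal_leI)
  qed (simp add: emeasure_notin_sets)
  then show ?thesis
    using sets_P[OF x] space_P[OF x] by (simp add: le_measure_iff le_fun_def)
qed

lemma sub_residual_measurable: "sub_residual \<in> measurable M (subprob_algebra M)"
proof (rule measurable_subprob_algebra)
  fix x assume x: "x \<in> space M"
  show "subprob_space (sub_residual x)"
    using emeasure_sub_residual_space[OF x] regen_prob_nonneg[of x] C_subset_space C_nonempty
    by (intro subprob_spaceI) auto
next
  fix A assume A: "A \<in> sets M"
  have "(\<lambda>x. ennreal (measure (P x) A - regen_prob x * measure nu A)) \<in> borel_measurable M"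
    using P A by measurable
  then show "(\<lambda>x. emeasure (sub_residual x) A) \<in> borel_measurable M"
    by (rule measurable_cong[THEN iffD1, rotated]) (simp add: emeasure_sub_residual A)
qed simp

lemma split_residual_eq_scale:
  assumes x: "x \<in> space M" and p: "regen_prob x < 1"
  shows "split_residual M P C d0 nu x = scale_measure (ennreal (1 / (1 - regen_prob x))) (sub_residual x)"
proof -
  let ?S = "scale_measure (ennreal (1 / (1 - regen_prob x))) (sub_residual x)"
  have eq: "(emeasure (P x) A - ennreal (d0 * indicator C x) * emeasure nu A) /
        (1 - ennreal (d0 * indicator C x)) = emeasure ?S A" if A: "A \<in> sets M" for A
  proof -
    have "emeasure (P x) A - ennreal (regen_prob x) * emeasure nu A
        = ennreal (measure (P x) A - regen_prob x * measure nu A)"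
      using regen_prob_nonneg[of x]
        finite_measure.emeasure_eq_measure[OF prob_space.finite_measure[OF prob_space_P[OF x]]]
        finite_measure.emeasure_eq_measure[OF prob_space.finite_measure[OF nu]]
      by (simp add: ennreal_mult[symmetric] ennreal_minus)
    moreover have "1 - ennreal (regen_prob x) = ennreal (1 - regen_prob x)"
      using regen_prob_nonneg[of x] by (simp add: ennreal_1[symmetric] ennreal_minus del: ennreal_1)
    ultimately have "(emeasure (P x) A - ennreal (regen_prob x) * emeasure nu A) / (1 - ennreal (regen_prob x))
        = ennreal ((measure (P x) A - regen_prob x * measure nu A) / (1 - regen_prob x))"
      using p minorization_measure[OF x A] by (simp add: divide_ennreal)
    also have "\<dots> = ennreal (1 / (1 - regen_prob x)) * ennreal (measure (P x) A - regen_prob x * measure nu A)"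
      using p minorization_measure[OF x A] by (simp add: ennreal_mult[symmetric])
    also have "\<dots> = emeasure ?S A"
      using emeasure_sub_residual[OF x A] by simp
    finally show ?thesis by (simp add: regen_prob_def)
  qed
  have "split_residual M P C d0 nu x = measure_of (space M) (sets M) (emeasure ?S)"
    unfolding split_residual_def
    by (rule measure_of_eq) (auto simp: sets.space_closed sets.sigma_sets_eq eq)
  also have "\<dots> = ?S"
    using measure_of_of_measure[of ?S] by (simp add: space_scale_measure)
  finally show ?thesis .
qed

lemma nn_integral_split_residual:
  assumes x: "x \<in> space M"
  shows "ennreal (1 - regen_prob x) * (\<integral>\<^sup>+y. h y \<partial>split_residual M P C d0 nu x)
       = (\<integral>\<^sup>+y. h y \<partial>sub_residual x)"
proof (cases "regen_prob x < 1")
  case True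
  have "ennreal (1 - regen_prob x) * ennreal (1 / (1 - regen_prob x)) = 1"
    using True by (simp add: ennreal_mult[symmetric])
  then show ?thesis
    unfolding split_residual_eq_scale[OF x True] nn_integral_scale_measure'
    by (simp add: mult.assoc[symmetric])
next
  case False
  then have p: "regen_prob x = 1" using regen_prob_le_1[of x] by simp
  have "(\<integral>\<^sup>+y. h y \<partial>sub_residual x) \<le> (\<integral>\<^sup>+y. top \<partial>sub_residual x)"
    by (intro nn_integral_mono) simp
  also have "\<dots> = 0" using emeasure_sub_residual_space[OF x] p by simp
  finally show ?thesis using p by simp
qed

lemma space_split_residual: "space (split_residual M P C d0 nu x) = space M"
  unfolding split_residual_def by (simp add: sets.space_closed)

lemma regen_prob_eq: "d0 * indicator C x = regen_prob x"
  by (simp add: regen_prob_def)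

lemma path_exp_0:
  "path_exp 0 x g = g [(x, True)] * ennreal (regen_prob x) + g [(x, False)] * ennreal (1 - regen_prob x)"
  using regen_prob_nonneg[of x] regen_prob_le_1[of x] by (simp add: regen_prob_eq)

lemma path_exp_Suc:
  assumes "x \<in> space M"
  shows "path_exp (Suc n) x g
    = (\<integral>\<^sup>+y. path_exp n y (\<lambda>zs. g ((x, True) # zs)) \<partial>nu) * ennreal (regen_prob x)
      + (\<integral>\<^sup>+y. path_exp n y (\<lambda>zs. g ((x, False) # zs)) \<partial>sub_residual x)"
  using regen_prob_nonneg[of x] regen_prob_le_1[of x]
    nn_integral_split_residual[OF assms, of "\<lambda>y. path_exp n y (\<lambda>zs. g ((x, False) # zs))"]
  by (simp add: regen_prob_eq mult.commute)

lemma path_exp_zero: "path_exp n x (\<lambda>_. 0) = 0"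
  by (induction n arbitrary: x) (simp_all add: regen_prob_eq)

lemma path_exp_mono:
  assumes "x \<in> space M"
    and "\<And>zs. length zs = Suc n \<Longrightarrow> \<forall>z\<in>set zs. fst z \<in> space M \<Longrightarrow> g zs \<le> g' zs"
  shows "path_exp n x g \<le> path_exp n x g'"
  using assms
proof (induction n arbitrary: x g g')
  case 0
  then show ?case unfolding path_exp_0 by (intro add_mono mult_right_mono) auto
next
  case (Suc n)
  have "path_exp n y (\<lambda>zs. g ((x, z) # zs)) \<le> path_exp n y (\<lambda>zs. g' ((x, z) # zs))"
    if "y \<in> space M" for y z
    using that Suc.prems by (intro Suc.IH) auto
  then show ?case
    unfolding split_path.simps
    by (intro nn_integral_mono) (auto simp: space_nu space_split_residual split: if_split_asm)
qed

text \<open>\<open>residual_iter n h x\<close> is \<open>E\<^sub>x[h(X\<^sub>n); Y\<^sub>0 = \<dots> = Y\<^sub>n\<^sub>-\<^sub>1 = 0]\<close>; for \<open>h = regen_prob\<close> it is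
  \<open>P\<^sub>x(T = n + 1)\<close>, for \<open>h = 1 - regen_prob\<close> it is \<open>P\<^sub>x(T > n + 1)\<close>.\<close>
primrec residual_iter :: "nat \<Rightarrow> ('a \<Rightarrow> ennreal) \<Rightarrow> 'a \<Rightarrow> ennreal" where
  "residual_iter 0 h = h"
| "residual_iter (Suc n) h = (\<lambda>x. \<integral>\<^sup>+y. residual_iter n h y \<partial>sub_residual x)"

lemma residual_iter_measurable[measurable]:
  "h \<in> borel_measurable M \<Longrightarrow> residual_iter n h \<in> borel_measurable M"
  by (induction n)
    (auto intro: measurable_compose[OF sub_residual_measurable nn_integral_measurable_subprob_algebra])

lemma path_exp_regen_at:
  "x \<in> space M \<Longrightarrow>
    path_exp n x (\<lambda>zs. if regen_at n zs then 1 else 0) = residual_iter n regen_prob x"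
proof (induction n arbitrary: x)
  case (Suc n)
  have "path_exp (Suc n) x (\<lambda>zs. if regen_at (Suc n) zs then 1 else 0)
      = (\<integral>\<^sup>+y. path_exp n y (\<lambda>zs. if regen_at n zs then 1 else 0) \<partial>sub_residual x)"
    unfolding path_exp_Suc[OF Suc.prems] by (simp add: regen_at_Suc path_exp_zero)
  then show ?case by (simp add: Suc.IH cong: nn_integral_cong_simp)
qed (unfold path_exp_0, simp add: regen_at_0)

lemma residual_iter_partition:
  "x \<in> space M \<Longrightarrow>
    (\<Sum>k\<le>n. residual_iter k regen_prob x) + residual_iter n (\<lambda>y. 1 - regen_prob y) x = 1"
proof (induction n arbitrary: x)
  case 0
  then show ?case using regen_prob_nonneg[of x] regen_prob_le_1[of x]
    by (simp add: ennreal_plus[symmetric] del: ennreal_plus)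
next
  case (Suc n)
  have "(\<Sum>k\<le>Suc n. residual_iter k regen_prob x) + residual_iter (Suc n) (\<lambda>y. 1 - regen_prob y) x
      = ennreal (regen_prob x) + ((\<Sum>k\<le>n. \<integral>\<^sup>+y. residual_iter k regen_prob y \<partial>sub_residual x)
          + (\<integral>\<^sup>+y. residual_iter n (\<lambda>y. 1 - regen_prob y) y \<partial>sub_residual x))"
    by (simp only: sum.atMost_Suc_shift add.assoc residual_iter.simps)
  also have "(\<Sum>k\<le>n. \<integral>\<^sup>+y. residual_iter k regen_prob y \<partial>sub_residual x)
      = (\<integral>\<^sup>+y. (\<Sum>k\<le>n. residual_iter k regen_prob y) \<partial>sub_residual x)"
    by (rule nn_integral_sum[symmetric]) simp
  also have "\<dots> + (\<integral>\<^sup>+y. residual_iter n (\<lambda>y. 1 - regen_prob y) y \<partial>sub_residual x)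
      = (\<integral>\<^sup>+y. (\<Sum>k\<le>n. residual_iter k regen_prob y) + residual_iter n (\<lambda>y. 1 - regen_prob y) y
          \<partial>sub_residual x)"
    by (rule nn_integral_add[symmetric]) simp_all
  also have "\<dots> = emeasure (sub_residual x) (space M)"
    by (simp add: Suc.IH cong: nn_integral_cong_simp)
  finally show ?case
    using emeasure_sub_residual_space[OF Suc.prems] regen_prob_nonneg[of x] regen_prob_le_1[of x]
    by (simp add: ennreal_plus[symmetric] del: ennreal_plus)
qed

lemma W_measurable[measurable]: "W \<in> borel_measurable M"
  unfolding W_def using V_measurable by measurable

lemma
  assumes "x \<in> space M"
  shows W_ge_1: "1 \<le> W x" and V_le_W: "V x \<le> W x"
  using V_ge_1[OF assms] drift_offset_ge_1[OF b d0] by (simp_all add: W_def)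

lemma ennreal_W: "y \<in> space M \<Longrightarrow> ennreal (W y) = ennreal (drift_offset b d0) + ennreal (V y)"
  using V_ge_1[of y] drift_offset_ge_1[OF b d0] by (simp add: W_def)

lemma nn_integral_sub_residual_W:
  assumes x: "x \<in> space M"
  shows "(\<integral>\<^sup>+y. ennreal (W y) \<partial>sub_residual x) \<le> ennreal (\<kappa> * W x)"
proof -
  let ?a = "drift_offset b d0"
  have a: "1 \<le> ?a" using drift_offset_ge_1[OF b d0] .
  have Vx: "1 \<le> V x" using V_ge_1 x .
  have "(\<integral>\<^sup>+y. ennreal (V y) \<partial>sub_residual x) \<le> (\<integral>\<^sup>+y. ennreal (V y) \<partial>P x)"
    by (rule nn_integral_mono_measure) (simp_all add: sets_P[OF x] sub_residual_le_P[OF x])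
  then have QV: "(\<integral>\<^sup>+y. ennreal (V y) \<partial>sub_residual x) \<le> ennreal (lam * V x + b * indicator C x)"
    using drift[OF x] by (rule order_trans)
  have "(\<integral>\<^sup>+y. ennreal (W y) \<partial>sub_residual x)
      = (\<integral>\<^sup>+y. ennreal ?a + ennreal (V y) \<partial>sub_residual x)"
    by (simp add: ennreal_W cong: nn_integral_cong_simp)
  also have "\<dots> = ennreal ?a * emeasure (sub_residual x) (space M) + (\<integral>\<^sup>+y. ennreal (V y) \<partial>sub_residual x)"
    using V_measurable by (subst nn_integral_add) auto
  also have "\<dots> \<le> ennreal (?a * (1 - regen_prob x)) + ennreal (lam * V x + b * indicator C x)"
    using a regen_prob_le_1[of x]
    by (intro add_mono QV) (simp add: emeasure_sub_residual_space[OF x] ennreal_mult)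
  also have "\<dots> = ennreal (?a * (1 - regen_prob x) + (lam * V x + b * indicator C x))"
    using a regen_prob_le_1[of x] Vx lam b by (intro ennreal_plus[symmetric]) auto
  also have "\<dots> \<le> ennreal (\<kappa> * W x)"
  proof (rule ennreal_leI, cases "x \<in> C")
    case True
    then show "?a * (1 - regen_prob x) + (lam * V x + b * indicator C x) \<le> \<kappa> * W x"
      using drift_rate_inequality(2)[OF lam b d0 Vx] by (simp add: W_def regen_prob_def)
  next
    case False
    then show "?a * (1 - regen_prob x) + (lam * V x + b * indicator C x) \<le> \<kappa> * W x"
      using drift_rate_inequality(1)[OF lam b d0 Vx] by (simp add: W_def regen_prob_def)
  qed
  finally show ?thesis .
qed

lemma residual_iter_le:
  assumes h: "\<And>y. y \<in> space M \<Longrightarrow> h y \<le> ennreal (W y)"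
  shows "x \<in> space M \<Longrightarrow> residual_iter n h x \<le> ennreal (\<kappa> ^ n * W x)"
proof (induction n arbitrary: x)
  case (Suc n)
  have \<kappa>: "0 \<le> \<kappa>" using drift_rate_bounds[OF lam b d0] by simp
  have "residual_iter n h y \<le> ennreal (\<kappa> ^ n) * ennreal (W y)" if "y \<in> space M" for y
    using Suc.IH[OF that] \<kappa> W_ge_1[OF that] by (simp add: ennreal_mult)
  then have "residual_iter (Suc n) h x \<le> (\<integral>\<^sup>+y. ennreal (\<kappa> ^ n) * ennreal (W y) \<partial>sub_residual x)"
    by (auto intro: nn_integral_mono)
  also have "\<dots> \<le> ennreal (\<kappa> ^ n) * ennreal (\<kappa> * W x)"
    by (simp add: nn_integral_cmult mult_left_mono nn_integral_sub_residual_W[OF Suc.prems])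
  also have "\<dots> = ennreal (\<kappa> ^ Suc n * W x)"
    using \<kappa> W_ge_1[OF Suc.prems] by (simp add: ennreal_mult[symmetric] algebra_simps)
  finally show ?case .
qed (simp add: h)

lemma nn_integral_nu_V: "(\<integral>\<^sup>+y. ennreal (V y) \<partial>nu) \<le> ennreal ((lam * Vs + b) / d0)"
proof -
  obtain x where x: "x \<in> C" using C_nonempty by blast
  then have xs: "x \<in> space M" using C_subset_space by blast
  have "emeasure (scale_measure (ennreal d0) nu) A \<le> emeasure (P x) A" for A
    using minorization[OF x] sets_nu by (cases "A \<in> sets M") (simp_all add: emeasure_notin_sets)
  then have le: "scale_measure (ennreal d0) nu \<le> P x"
    using sets_P[OF xs] space_P[OF xs] space_nu sets_nu
    by (simp add: le_measure_iff le_fun_def space_scale_measure)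
  have "ennreal d0 * (\<integral>\<^sup>+y. ennreal (V y) \<partial>nu) = (\<integral>\<^sup>+y. ennreal (V y) \<partial>scale_measure (ennreal d0) nu)"
    by (simp add: nn_integral_scale_measure')
  also have "\<dots> \<le> (\<integral>\<^sup>+y. ennreal (V y) \<partial>P x)"
    by (rule nn_integral_mono_measure[OF _ le]) (simp add: sets_P[OF xs] sets_nu)
  also have "\<dots> \<le> ennreal (lam * V x + b)"
    using drift[OF xs] x by simp
  also have "\<dots> \<le> ennreal (lam * Vs + b)"
    using V_le_Vs[OF x] lam by (intro ennreal_leI) simp
  finally have h: "ennreal d0 * (\<integral>\<^sup>+y. ennreal (V y) \<partial>nu) \<le> ennreal (lam * Vs + b)" .
  have "(\<integral>\<^sup>+y. ennreal (V y) \<partial>nu) = ennreal (1 / d0) * (ennreal d0 * (\<integral>\<^sup>+y. ennreal (V y) \<partial>nu))"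
    using d0 by (simp add: mult.assoc[symmetric] ennreal_mult[symmetric])
  also have "\<dots> \<le> ennreal (1 / d0) * ennreal (lam * Vs + b)"
    by (intro mult_left_mono h) simp
  also have "\<dots> = ennreal ((lam * Vs + b) / d0)"
  proof -
    have "0 \<le> lam * Vs + b" using Vs_ge_1 lam b by simp
    then show ?thesis using d0 by (simp add: ennreal_mult[symmetric])
  qed
  finally show ?thesis .
qed

lemma nn_integral_nu_W: "(\<integral>\<^sup>+y. ennreal (W y) \<partial>nu) \<le> ennreal nu_W_bound"
proof -
  have "(\<integral>\<^sup>+y. ennreal (W y) \<partial>nu) = (\<integral>\<^sup>+y. ennreal (drift_offset b d0) + ennreal (V y) \<partial>nu)"
    by (simp add: ennreal_W space_nu cong: nn_integral_cong_simp)
  also have "\<dots> = ennreal (drift_offset b d0) + (\<integral>\<^sup>+y. ennreal (V y) \<partial>nu)"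
    using V_measurable prob_space.emeasure_space_1[OF nu] space_nu
    by (subst nn_integral_add) auto
  also have "\<dots> \<le> ennreal (drift_offset b d0) + ennreal ((lam * Vs + b) / d0)"
    by (intro add_left_mono nn_integral_nu_V)
  also have "\<dots> = ennreal nu_W_bound"
    using Vs_ge_1 lam b d0 drift_offset_ge_1[OF b d0] by (simp add: nu_W_bound_def)
  finally show ?thesis .
qed

lemma nu_W_bound_pos: "0 < nu_W_bound"
  using Vs_ge_1 lam b d0 drift_offset_ge_1[OF b d0] by (simp add: nu_W_bound_def add_pos_nonneg)

lemma nn_integral_no_regen_le:
  "(\<integral>\<^sup>+x. residual_iter n (\<lambda>y. 1 - regen_prob y) x \<partial>nu) \<le> ennreal (\<kappa> ^ n * nu_W_bound)"
proof -
  have \<kappa>: "0 \<le> \<kappa>" using drift_rate_bounds[OF lam b d0] by simp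
  have "(\<integral>\<^sup>+x. residual_iter n (\<lambda>y. 1 - regen_prob y) x \<partial>nu)
      \<le> (\<integral>\<^sup>+x. ennreal (\<kappa> ^ n) * ennreal (W x) \<partial>nu)"
  proof (intro nn_integral_mono)
    fix x assume "x \<in> space nu"
    moreover have "ennreal (1 - regen_prob y) \<le> ennreal (W y)" if "y \<in> space M" for y
      using regen_prob_nonneg[of y] W_ge_1[OF that] by (intro ennreal_leI) simp
    ultimately show "residual_iter n (\<lambda>y. 1 - regen_prob y) x \<le> ennreal (\<kappa> ^ n) * ennreal (W x)"
      using residual_iter_le[of "\<lambda>y. 1 - regen_prob y" x n] \<kappa> W_ge_1[of x]
      by (simp add: space_nu ennreal_mult)
  qed
  also have "\<dots> \<le> ennreal (\<kappa> ^ n) * ennreal nu_W_bound"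
    by (simp add: nn_integral_cmult mult_left_mono nn_integral_nu_W)
  also have "\<dots> = ennreal (\<kappa> ^ n * nu_W_bound)"
    using \<kappa> nu_W_bound_pos by (simp add: ennreal_mult)
  finally show ?thesis .
qed

lemma suminf_residual_iter_regen_le_1:
  assumes "x \<in> space M"
  shows "(\<Sum>n. residual_iter n regen_prob x) \<le> 1"
proof (rule suminf_le_const[OF summableI])
  fix n
  have "(\<Sum>k<n. residual_iter k regen_prob x) \<le> (\<Sum>k\<le>n. residual_iter k regen_prob x)"
    by (intro sum_mono2) auto
  also have "\<dots> \<le> 1" using residual_iter_partition[OF assms, of n] by (metis le_iff_add)
  finally show "(\<Sum>k<n. residual_iter k regen_prob x) \<le> 1" .
qed

lemma regen_time_finite:
  "(\<Sum>n. split_exp M P C d0 nu n (\<lambda>zs. if regen_at n zs then 1 else 0)) = 1"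
proof -
  let ?F = "\<lambda>x. \<Sum>n. residual_iter n regen_prob x"
  have "split_exp M P C d0 nu n (\<lambda>zs. if regen_at n zs then 1 else 0)
      = (\<integral>\<^sup>+x. residual_iter n regen_prob x \<partial>nu)" for n
    unfolding split_exp_def by (intro nn_integral_cong) (simp add: path_exp_regen_at space_nu)
  then have sum_eq: "(\<Sum>n. split_exp M P C d0 nu n (\<lambda>zs. if regen_at n zs then 1 else 0))
      = (\<integral>\<^sup>+x. ?F x \<partial>nu)"
    by (simp add: nn_integral_suminf)
  have "(\<integral>\<^sup>+x. ?F x \<partial>nu) \<le> (\<integral>\<^sup>+x. 1 \<partial>nu)"
    by (intro nn_integral_mono suminf_residual_iter_regen_le_1) (simp add: space_nu)
  then have upper: "(\<integral>\<^sup>+x. ?F x \<partial>nu) \<le> 1"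
    using prob_space.emeasure_space_1[OF nu] by simp
  have lower: "1 \<le> (\<integral>\<^sup>+x. ?F x \<partial>nu)"
  proof (rule ennreal_le_epsilon)
    fix e :: real assume e: "0 < e"
    obtain n where n: "\<kappa> ^ n < e / nu_W_bound"
      using real_arch_pow_inv[of "e / nu_W_bound" \<kappa>] e nu_W_bound_pos drift_rate_bounds[OF lam b d0]
      by auto
    have "1 = (\<integral>\<^sup>+x. (\<Sum>k\<le>n. residual_iter k regen_prob x) + residual_iter n (\<lambda>y. 1 - regen_prob y) x \<partial>nu)"
      using prob_space.emeasure_space_1[OF nu]
      by (simp add: residual_iter_partition space_nu cong: nn_integral_cong_simp)
    also have "\<dots> = (\<integral>\<^sup>+x. (\<Sum>k\<le>n. residual_iter k regen_prob x) \<partial>nu)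
        + (\<integral>\<^sup>+x. residual_iter n (\<lambda>y. 1 - regen_prob y) x \<partial>nu)"
      by (rule nn_integral_add) auto
    also have "\<dots> \<le> (\<integral>\<^sup>+x. ?F x \<partial>nu) + ennreal e"
    proof (intro add_mono)
      show "(\<integral>\<^sup>+x. (\<Sum>k\<le>n. residual_iter k regen_prob x) \<partial>nu) \<le> (\<integral>\<^sup>+x. ?F x \<partial>nu)"
        by (intro nn_integral_mono sum_le_suminf) auto
      have "\<kappa> ^ n * nu_W_bound \<le> e" using n nu_W_bound_pos by (simp add: pos_less_divide_eq)
      then show "(\<integral>\<^sup>+x. residual_iter n (\<lambda>y. 1 - regen_prob y) x \<partial>nu) \<le> ennreal e"
        using nn_integral_no_regen_le[of n] by (auto intro: order_trans ennreal_leI)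
    qed
    finally show "1 \<le> (\<integral>\<^sup>+x. ?F x \<partial>nu) + ennreal e" .
  qed
  show ?thesis unfolding sum_eq using upper lower by (rule antisym)
qed

text \<open>In the induction over the first step, \<open>s\<close> collects the \<open>V\<close>-values already visited and \<open>t\<close> the factors \<open>q\<close> already spent.\<close>
definition regen_weight :: "real \<Rightarrow> real \<Rightarrow> real \<Rightarrow> real \<Rightarrow> nat \<Rightarrow> ('a \<times> bool) list \<Rightarrow> ennreal" where
  "regen_weight c q s t n zs =
     (if regen_at n zs then ennreal (s + c * (\<Sum>j\<le>n. V (fst (zs ! j))) + t * q ^ n) else 0)"

lemma path_exp_regen_weight_0:
  "path_exp 0 x (regen_weight c q s t 0) = ennreal (s + c * V x + t) * ennreal (regen_prob x)"
  unfolding path_exp_0 by (simp add: regen_weight_def regen_at_def)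

lemma path_exp_regen_weight_Suc:
  assumes "x \<in> space M"
  shows "path_exp (Suc n) x (regen_weight c q s t (Suc n))
    = (\<integral>\<^sup>+y. path_exp n y (regen_weight c q (s + c * V x) (t * q) n) \<partial>sub_residual x)"
proof -
  have "(\<Sum>j\<le>Suc n. V (fst (((x, False) # zs) ! j))) = V x + (\<Sum>j\<le>n. V (fst (zs ! j)))" for zs
    unfolding sum.atMost_Suc_shift by simp
  then have "regen_weight c q s t (Suc n) ((x, False) # zs) = regen_weight c q (s + c * V x) (t * q) n zs"
    for zs
    by (simp add: regen_weight_def regen_at_Suc algebra_simps)
  moreover have "regen_weight c q s t (Suc n) ((x, True) # zs) = 0" for zs
    by (simp add: regen_weight_def regen_at_Suc)
  ultimately show ?thesis unfolding path_exp_Suc[OF assms] by (simp add: path_exp_zero)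
qed

lemma nn_integral_sub_residual_le_affine_W:
  assumes x: "x \<in> space M" and s: "0 \<le> s" and c: "0 \<le> c"
    and h: "\<And>y. y \<in> space M \<Longrightarrow> h y \<le> ennreal s + ennreal c * ennreal (W y)"
  shows "(\<integral>\<^sup>+y. h y \<partial>sub_residual x) \<le> ennreal (s * (1 - regen_prob x) + c * (\<kappa> * W x))"
proof -
  have "(\<integral>\<^sup>+y. h y \<partial>sub_residual x) \<le> (\<integral>\<^sup>+y. ennreal s + ennreal c * ennreal (W y) \<partial>sub_residual x)"
    using h by (intro nn_integral_mono) simp
  also have "\<dots> = ennreal s * emeasure (sub_residual x) (space M) + ennreal c * (\<integral>\<^sup>+y. ennreal (W y) \<partial>sub_residual x)"
    by (simp add: nn_integral_add nn_integral_cmult)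
  also have "\<dots> \<le> ennreal (s * (1 - regen_prob x)) + ennreal (c * (\<kappa> * W x))"
  proof (rule add_mono)
    show "ennreal s * emeasure (sub_residual x) (space M) \<le> ennreal (s * (1 - regen_prob x))"
      using s regen_prob_le_1[of x] by (simp add: emeasure_sub_residual_space[OF x] ennreal_mult)
    have "ennreal c * (\<integral>\<^sup>+y. ennreal (W y) \<partial>sub_residual x) \<le> ennreal c * ennreal (\<kappa> * W x)"
      by (intro mult_left_mono nn_integral_sub_residual_W[OF x]) simp
    then show "ennreal c * (\<integral>\<^sup>+y. ennreal (W y) \<partial>sub_residual x) \<le> ennreal (c * (\<kappa> * W x))"
      using c drift_rate_bounds[OF lam b d0] W_ge_1[OF x] by (simp add: ennreal_mult)
  qed
  also have "\<dots> = ennreal (s * (1 - regen_prob x) + c * (\<kappa> * W x))"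
    using s c regen_prob_le_1[of x] drift_rate_bounds[OF lam b d0] W_ge_1[OF x]
    by (intro ennreal_plus[symmetric]) simp_all
  finally show ?thesis .
qed

lemma path_exp_regen_weight_0_le:
  assumes c: "0 \<le> c" and t: "0 \<le> t" and q: "0 \<le> q" "q * \<kappa> < 1" and x: "x \<in> space M"
  shows "path_exp 0 x (regen_weight c q s t 0) \<le> ennreal (s + (c / (1 - \<kappa>) + t / (1 - q * \<kappa>)) * W x)"
proof -
  have \<kappa>: "0 < \<kappa>" "\<kappa> < 1" using drift_rate_bounds[OF lam b d0] by simp_all
  have "ennreal (regen_prob x) \<le> 1" using regen_prob_le_1 by simp
  then have "path_exp 0 x (regen_weight c q s t 0) \<le> ennreal (s + c * V x + t)"
    unfolding path_exp_regen_weight_0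
    using mult_left_mono[of "ennreal (regen_prob x)" 1 "ennreal (s + c * V x + t)"] by simp
  also have "\<dots> \<le> ennreal (s + (c / (1 - \<kappa>) + t / (1 - q * \<kappa>)) * W x)"
  proof -
    have "c * V x \<le> c / (1 - \<kappa>) * W x"
      using mult_le_divide_one_minus_mult[OF c _ V_le_W] V_ge_1 \<kappa> x by force
    moreover have "t * 1 \<le> t / (1 - q * \<kappa>) * W x"
      using mult_le_divide_one_minus_mult[OF t _ W_ge_1 _ q(2)] q \<kappa> x by force
    ultimately show ?thesis by (intro ennreal_leI) (simp add: distrib_right)
  qed
  finally show ?thesis .
qed

lemma regen_weight_sum_bound:
  assumes c: "0 \<le> c" and q: "0 < q" "q * \<kappa> < 1"
    and x: "x \<in> space M" and s: "0 \<le> s" and t: "0 \<le> t"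
  shows "(\<Sum>n\<le>N. path_exp n x (regen_weight c q s t n))
      \<le> ennreal (s + (c / (1 - \<kappa>) + t / (1 - q * \<kappa>)) * W x)"
  using x s t
proof (induction N arbitrary: x s t)
  case 0
  then show ?case using path_exp_regen_weight_0_le[OF c _ _ q(2)] q(1) by simp
next
  case (Suc N)
  let ?s = "s + c * V x" and ?t = "t * q"
  let ?B = "c / (1 - \<kappa>) + ?t / (1 - q * \<kappa>)"
  have \<kappa>: "0 < \<kappa>" "\<kappa> < 1" using drift_rate_bounds[OF lam b d0] by simp_all
  have s': "0 \<le> ?s" using Suc.prems c V_ge_1[of x] by simp
  have t': "0 \<le> ?t" using Suc.prems q by simp
  have B: "0 \<le> ?B" using c t' \<kappa> q by simp
  have IH: "(\<Sum>n\<le>N. path_exp n y (regen_weight c q ?s ?t n)) \<le> ennreal ?s + ennreal ?B * ennreal (W y)"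
    if "y \<in> space M" for y
    using Suc.IH[OF that s' t'] s' B W_ge_1[OF that] by (simp add: ennreal_mult)
  have "(\<Sum>n\<le>Suc N. path_exp n x (regen_weight c q s t n))
      = path_exp 0 x (regen_weight c q s t 0)
        + (\<Sum>n\<le>N. \<integral>\<^sup>+y. path_exp n y (regen_weight c q ?s ?t n) \<partial>sub_residual x)"
    by (subst sum.atMost_Suc_shift) (simp only: path_exp_regen_weight_Suc[OF Suc.prems(1)])
  also have "\<dots> \<le> ennreal ((s + c * V x + t) * regen_prob x)
        + (\<integral>\<^sup>+y. (\<Sum>n\<le>N. path_exp n y (regen_weight c q ?s ?t n)) \<partial>sub_residual x)"
  proof (rule add_mono)
    show "path_exp 0 x (regen_weight c q s t 0) \<le> ennreal ((s + c * V x + t) * regen_prob x)"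
      unfolding path_exp_regen_weight_0 using s' Suc.prems regen_prob_nonneg[of x]
      by (simp add: ennreal_mult)
  qed (rule nn_integral_sum_superadditive, simp)
  also have "\<dots> \<le> ennreal ((s + c * V x + t) * regen_prob x)
        + ennreal (?s * (1 - regen_prob x) + ?B * (\<kappa> * W x))"
    by (intro add_left_mono nn_integral_sub_residual_le_affine_W[OF Suc.prems(1) s' B IH])
  also have "\<dots> = ennreal ((s + c * V x + t) * regen_prob x + ?s * (1 - regen_prob x) + ?B * (\<kappa> * W x))"
    using s' Suc.prems B \<kappa> W_ge_1[OF Suc.prems(1)] regen_prob_nonneg[of x] regen_prob_le_1[of x]
    by (subst add.assoc, intro ennreal_plus[symmetric]) simp_all
  also have "\<dots> \<le> ennreal (s + (c / (1 - \<kappa>) + t / (1 - q * \<kappa>)) * W x)"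
    using regen_prob_le_1[of x] W_ge_1[OF Suc.prems(1)]
    by (intro ennreal_leI regen_weight_step_inequality \<kappa>(2) q(2) c Suc.prems(3) V_le_W Suc.prems(1))
      linarith
  finally show ?case .
qed

lemma split_exp_le_regen_weight:
  assumes f: "\<And>x. (\<And>j. j \<le> n \<Longrightarrow> x j \<in> space M) \<Longrightarrow>
      \<bar>\<Sum>j\<le>n. f (x j)\<bar> powr p \<le> c * (\<Sum>j\<le>n. V (x j)) + c' * q ^ n"
  shows "split_exp M P C d0 nu n (\<lambda>zs. if regen_at n zs
            then ennreal (\<bar>\<Sum>j\<le>n. f (fst (zs ! j))\<bar> powr p) else 0)
    \<le> (\<integral>\<^sup>+x. path_exp n x (regen_weight c q 0 c' n) \<partial>nu)"
  unfolding split_exp_def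
proof (intro nn_integral_mono path_exp_mono)
  fix x assume "x \<in> space nu"
  then show "x \<in> space M" by (simp add: space_nu)
next
  fix zs :: "('a \<times> bool) list"
  assume "length zs = Suc n" "\<forall>z\<in>set zs. fst z \<in> space M"
  then have "\<bar>\<Sum>j\<le>n. f (fst (zs ! j))\<bar> powr p \<le> c * (\<Sum>j\<le>n. V (fst (zs ! j))) + c' * q ^ n"
    by (intro f) auto
  then show "(if regen_at n zs then ennreal (\<bar>\<Sum>j\<le>n. f (fst (zs ! j))\<bar> powr p) else 0)
      \<le> regen_weight c q 0 c' n zs"
    by (simp add: regen_weight_def ennreal_leI)
qed

lemma regen_moment_bound:
  assumes c: "0 \<le> c" and q: "0 < q" "q * \<kappa> < 1" and c': "0 \<le> c'"
    and f: "\<And>n x. (\<And>j. j \<le> n \<Longrightarrow> x j \<in> space M) \<Longrightarrow>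
      \<bar>\<Sum>j\<le>n. f (x j)\<bar> powr p \<le> c * (\<Sum>j\<le>n. V (x j)) + c' * q ^ n"
  shows "(\<Sum>n. split_exp M P C d0 nu n (\<lambda>zs. if regen_at n zs
            then ennreal (\<bar>\<Sum>j\<le>n. f (fst (zs ! j))\<bar> powr p) else 0))
    \<le> ennreal ((c / (1 - \<kappa>) + c' / (1 - q * \<kappa>)) * nu_W_bound)"
proof -
  let ?B = "c / (1 - \<kappa>) + c' / (1 - q * \<kappa>)"
  let ?g = "\<lambda>n zs. if regen_at n zs then ennreal (\<bar>\<Sum>j\<le>n. f (fst (zs ! j))\<bar> powr p) else 0"
  have B: "0 \<le> ?B" using c c' q drift_rate_bounds[OF lam b d0] by simp
  show ?thesis
  proof (rule suminf_le_const[OF summableI])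
    fix N
    have "(\<Sum>n<N. split_exp M P C d0 nu n (?g n)) \<le> (\<Sum>n<N. \<integral>\<^sup>+x. path_exp n x (regen_weight c q 0 c' n) \<partial>nu)"
      by (intro sum_mono split_exp_le_regen_weight f)
    also have "\<dots> \<le> (\<integral>\<^sup>+x. (\<Sum>n<N. path_exp n x (regen_weight c q 0 c' n)) \<partial>nu)"
      by (rule nn_integral_sum_superadditive) simp
    also have "\<dots> \<le> (\<integral>\<^sup>+x. ennreal ?B * ennreal (W x) \<partial>nu)"
    proof (intro nn_integral_mono)
      fix x assume "x \<in> space nu"
      then have x: "x \<in> space M" by (simp add: space_nu)
      have "(\<Sum>n<N. path_exp n x (regen_weight c q 0 c' n)) \<le> (\<Sum>n\<le>N. path_exp n x (regen_weight c q 0 c' n))"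
        by (intro sum_mono2) auto
      also have "\<dots> \<le> ennreal (0 + ?B * W x)"
        by (rule regen_weight_sum_bound[OF c q x order.refl c'])
      finally show "(\<Sum>n<N. path_exp n x (regen_weight c q 0 c' n)) \<le> ennreal ?B * ennreal (W x)"
        using B W_ge_1[OF x] by (simp add: ennreal_mult)
    qed
    also have "\<dots> \<le> ennreal ?B * ennreal nu_W_bound"
      by (simp add: nn_integral_cmult mult_left_mono nn_integral_nu_W)
    also have "\<dots> = ennreal (?B * nu_W_bound)"
      using B nu_W_bound_pos by (simp add: ennreal_mult)
    finally show "(\<Sum>n<N. split_exp M P C d0 nu n (?g n)) \<le> ennreal (?B * nu_W_bound)" .
  qed
qed

end

lemma split_chain_if_assumptions:
  assumes A: "assumption_A M \<Gamma> P \<pi> C \<nu> \<delta>0" and GD: "drift_GD M \<Gamma> P C V lam b"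
    and Vs: "\<forall>x\<in>C. V x \<le> Vs" and \<gamma>: "\<gamma> \<in> \<Gamma>"
  shows "split_chain M (P \<gamma>) C \<delta>0 \<nu> V lam (max b 0) Vs"
proof -
  have drift: "(\<integral>\<^sup>+y. ennreal (V y) \<partial>P \<gamma> x) \<le> ennreal (lam * V x + max b 0 * indicator C x)"
    if "x \<in> space M" for x
  proof -
    have "ennreal (lam * V x + b * indicator C x) \<le> ennreal (lam * V x + max b 0 * indicator C x)"
      by (intro ennreal_leI) (simp add: indicator_def)
    then show ?thesis using GD \<gamma> that unfolding drift_GD_def by (blast intro: order_trans)
  qed
  have "C \<noteq> {}" using A by (auto simp: assumption_A_def)
  then show ?thesis
    using A GD Vs \<gamma> drift
    unfolding split_chain_def assumption_A_def drift_GD_def markov_kernel_def by auto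
qed

lemma uniform_regen_moment_bound:
  fixes f :: "'a \<Rightarrow> real"
  assumes chains: "\<And>\<gamma>. \<gamma> \<in> \<Gamma> \<Longrightarrow> split_chain M (P \<gamma>) C d0 nu V lam b Vs"
    and lam: "0 < lam" "lam < 1" and b: "0 \<le> b" and d0: "0 < d0"
    and V: "\<And>x. x \<in> space M \<Longrightarrow> 1 \<le> V x"
    and \<delta>: "0 < \<delta>" and f: "\<And>x. x \<in> space M \<Longrightarrow> \<bar>f x\<bar> \<le> K * V x powr (1/2 - \<delta>)"
  shows "(SUP \<gamma>\<in>\<Gamma>. \<Sum>n. split_exp M (P \<gamma>) C d0 nu n (\<lambda>zs. if regen_at n zs
            then ennreal (\<bar>\<Sum>j\<le>n. f (fst (zs ! j))\<bar> powr (2 + \<delta>)) else 0)) < \<infinity>"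
proof -
  let ?k = "drift_rate lam b d0"
  define q where "q = 2 / (1 + ?k)"
  have q: "0 < q" "q * ?k < 1" "1 < q"
    using drift_rate_bounds[OF lam b d0] by (auto simp: q_def field_simps)
  show ?thesis
  proof (rule abs_sum_powr_le_geometric[where S = "space M" and f = f and q = q, OF V f \<delta> q(3)])
    fix c c' assume c: "0 \<le> c" "0 \<le> c'" and f_sum: "\<And>n x. (\<And>j. j \<le> n \<Longrightarrow> x j \<in> space M) \<Longrightarrow>
      \<bar>\<Sum>j\<le>n. f (x j)\<bar> powr (2 + \<delta>) \<le> c * (\<Sum>j\<le>n. V (x j)) + c' * q ^ n"
    define B where "B = (c / (1 - ?k) + c' / (1 - q * ?k)) * (drift_offset b d0 + (lam * Vs + b) / d0)"
    have "(SUP \<gamma>\<in>\<Gamma>. \<Sum>n. split_exp M (P \<gamma>) C d0 nu n (\<lambda>zs. if regen_at n zs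
              then ennreal (\<bar>\<Sum>j\<le>n. f (fst (zs ! j))\<bar> powr (2 + \<delta>)) else 0)) \<le> ennreal B"
    proof (rule SUP_least)
      fix \<gamma> assume "\<gamma> \<in> \<Gamma>"
      then interpret split_chain M "P \<gamma>" C d0 nu V lam b Vs by (rule chains)
      from regen_moment_bound[OF c(1) q(1,2) c(2) f_sum]
      show "(\<Sum>n. split_exp M (P \<gamma>) C d0 nu n (\<lambda>zs. if regen_at n zs
              then ennreal (\<bar>\<Sum>j\<le>n. f (fst (zs ! j))\<bar> powr (2 + \<delta>)) else 0)) \<le> ennreal B"
        unfolding B_def nu_W_bound_def .
    qed
    also have "ennreal B < \<infinity>" by simp
    finally show ?thesis .
  qed
qed

theorem mainTheorem2:
  fixes M :: "'a measure" and \<Gamma> :: "'g set" and P :: "'g \<Rightarrow> 'a \<Rightarrow> 'a measure"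
    and \<pi> \<nu> :: "'a measure" and C :: "'a set" and \<delta>0 :: real
    and V :: "'a \<Rightarrow> real" and lam b :: real
  assumes A: "assumption_A M \<Gamma> P \<pi> C \<nu> \<delta>0"
    and GD: "drift_GD M \<Gamma> P C V lam b"
    and VC: "bdd_above (V ` C)"
  shows "\<forall>f :: 'a \<Rightarrow> real. f \<in> borel_measurable M \<and>
           (\<exists>\<delta>>0. W_norm_finite M (\<lambda>x. V x powr (1/2 - \<delta>)) f)
           \<longrightarrow> assumption_L M \<Gamma> P C \<delta>0 \<nu> f"
proof (intro allI impI)
  fix f :: "'a \<Rightarrow> real"
  assume "f \<in> borel_measurable M \<and> (\<exists>\<delta>>0. W_norm_finite M (\<lambda>x. V x powr (1/2 - \<delta>)) f)"
  then obtain \<delta> K where \<delta>: "0 < \<delta>" and f: "\<forall>x\<in>space M. \<bar>f x\<bar> \<le> K * V x powr (1/2 - \<delta>)"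
    by (auto simp: W_norm_finite_def)
  obtain Vs where "\<forall>x\<in>C. V x \<le> Vs" using VC by (auto simp: bdd_above_def)
  then have chains: "\<And>\<gamma>. \<gamma> \<in> \<Gamma> \<Longrightarrow> split_chain M (P \<gamma>) C \<delta>0 \<nu> V lam (max b 0) Vs"
    using A GD by (blast intro: split_chain_if_assumptions)
  have "0 < lam" "lam < 1" "0 < \<delta>0" "\<And>x. x \<in> space M \<Longrightarrow> 1 \<le> V x"
    using A GD by (auto simp: assumption_A_def drift_GD_def)
  then have moments: "(SUP \<gamma>\<in>\<Gamma>. \<Sum>n. split_exp M (P \<gamma>) C \<delta>0 \<nu> n (\<lambda>zs. if regen_at n zs
      then ennreal (\<bar>\<Sum>j\<le>n. f (fst (zs ! j))\<bar> powr (2 + \<delta>)) else 0)) < \<infinity>"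
    using f by (intro uniform_regen_moment_bound[OF chains _ _ _ _ _ \<delta>]) auto
  show "assumption_L M \<Gamma> P C \<delta>0 \<nu> f"
    unfolding assumption_L_def
    using \<delta> moments split_chain.regen_time_finite[OF chains] by blast
qed

end
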